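(* Let $G$ be a non-complete double-critical $k$-chromatic graph with $k\ge 6$. Then no minimal separating set $S$ of $G$ can be partitioned into two disjoint sets $A$ and $B$ such that $G[A]$ is edge-empty and $G[B]$ is complete.
   Context: All graphs are finite and simple. A graph $G$ is (vertex-)critical if $\chi(G-v)<\chi(G)$ for every vertex $v\in V(G)$. A critical graph $G$ is double-critical if $\chi(G-x-y)\le\chi(G)-2$ for every edge $xy\in E(G)$. A separating set is a set $S\subseteq V(G)$ such that $G-S$ is disconnected; it is minimal if no proper subset is separating. Either of $A,B$ may be empty. *)

theory Defs
  imports Main
begin

text \<open>Subgraphs G - S are (V - S, E)
  (all notions below only consult E between vertices of the given vertex set).\<close>

definition simple_graph :: "'a set \<Rightarrow> ('a \<Rightarrow> 'a \<Rightarrow> bool) \<Rightarrow> bool" where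
  "simple_graph V E \<longleftrightarrow> finite V \<and>
     (\<forall>x y. E x y \<longrightarrow> x \<in> V \<and> y \<in> V \<and> x \<noteq> y \<and> E y x)"

definition proper_colouring :: "'a set \<Rightarrow> ('a \<Rightarrow> 'a \<Rightarrow> bool) \<Rightarrow> nat \<Rightarrow> ('a \<Rightarrow> nat) \<Rightarrow> bool" where
  "proper_colouring V E k f \<longleftrightarrow>
     (\<forall>v\<in>V. f v < k) \<and> (\<forall>x\<in>V. \<forall>y\<in>V. E x y \<longrightarrow> f x \<noteq> f y)"

definition chromatic_number :: "'a set \<Rightarrow> ('a \<Rightarrow> 'a \<Rightarrow> bool) \<Rightarrow> nat" where
  "chromatic_number V E = (LEAST k. \<exists>f. proper_colouring V E k f)"

definition vertex_critical :: "'a set \<Rightarrow> ('a \<Rightarrow> 'a \<Rightarrow> bool) \<Rightarrow> bool" where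
  "vertex_critical V E \<longleftrightarrow>
     (\<forall>v\<in>V. chromatic_number (V - {v}) E < chromatic_number V E)"

definition double_critical :: "'a set \<Rightarrow> ('a \<Rightarrow> 'a \<Rightarrow> bool) \<Rightarrow> bool" where
  "double_critical V E \<longleftrightarrow> vertex_critical V E \<and>
     (\<forall>x\<in>V. \<forall>y\<in>V. E x y \<longrightarrow>
        chromatic_number (V - {x, y}) E + 2 \<le> chromatic_number V E)"

definition complete_on :: "'a set \<Rightarrow> ('a \<Rightarrow> 'a \<Rightarrow> bool) \<Rightarrow> bool" where
  "complete_on V E \<longleftrightarrow> (\<forall>x\<in>V. \<forall>y\<in>V. x \<noteq> y \<longrightarrow> E x y)"

definition edgeless_on :: "'a set \<Rightarrow> ('a \<Rightarrow> 'a \<Rightarrow> bool) \<Rightarrow> bool" where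
  "edgeless_on V E \<longleftrightarrow> (\<forall>x\<in>V. \<forall>y\<in>V. \<not> E x y)"

definition reachable_in :: "'a set \<Rightarrow> ('a \<Rightarrow> 'a \<Rightarrow> bool) \<Rightarrow> 'a \<Rightarrow> 'a \<Rightarrow> bool" where
  "reachable_in V E x y \<longleftrightarrow> (\<lambda>a b. a \<in> V \<and> b \<in> V \<and> E a b)\<^sup>*\<^sup>* x y"

text \<open>Disconnected: there are two vertices with no path between them
  (so the empty graph and one-vertex graphs are not disconnected).\<close>
definition disconnected :: "'a set \<Rightarrow> ('a \<Rightarrow> 'a \<Rightarrow> bool) \<Rightarrow> bool" where
  "disconnected V E \<longleftrightarrow> (\<exists>x\<in>V. \<exists>y\<in>V. \<not> reachable_in V E x y)"

definition separating_set :: "'a set \<Rightarrow> ('a \<Rightarrow> 'a \<Rightarrow> bool) \<Rightarrow> 'a set \<Rightarrow> bool" where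
  "separating_set V E S \<longleftrightarrow> S \<subseteq> V \<and> disconnected (V - S) E"

definition minimal_separating_set :: "'a set \<Rightarrow> ('a \<Rightarrow> 'a \<Rightarrow> bool) \<Rightarrow> 'a set \<Rightarrow> bool" where
  "minimal_separating_set V E S \<longleftrightarrow> separating_set V E S \<and>
     (\<forall>T. T \<subset> S \<longrightarrow> \<not> separating_set V E T)"

end

theory Submission
  imports Defs
begin

text \<open>Let S = A \<union> B separate G into sides C and D. Each side G[C \<union> S] has a
  (k-1)-colouring in which B is rainbow and A is a whole colour class: if A is empty,
  restrict a (k-1)-colouring of G - y for some y in the other side; otherwise, by
  minimality some a \<in> A has a neighbour x on the other side, and a (k-2)-colouring of
  G - a - x together with one new colour for the independent set A does it. Both
  colourings then partition S in the same way, so after permuting the colours of one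
  of them they agree on S and combine to a (k-1)-colouring of G, a contradiction.\<close>

lemma proper_colouring_chromatic_number:
  assumes "finite V" and "\<And>x. \<not> E x x"
  shows "\<exists>f. proper_colouring V E (chromatic_number V E) f"
proof -
  obtain f and n :: nat where "f ` V = {i. i < n}" "inj_on f V"
    using finite_imp_inj_to_nat_seg[OF assms(1)] by blast
  then have "proper_colouring V E n f"
    using assms(2) unfolding proper_colouring_def inj_on_def by blast
  then show ?thesis
    unfolding chromatic_number_def
    using LeastI_ex[of "\<lambda>k. \<exists>f. proper_colouring V E k f"] by blast
qed

lemma proper_colouring_mono:
  assumes "proper_colouring V E k f" and "W \<subseteq> V" and "k \<le> l"
  shows "proper_colouring W E l f"
  using assms unfolding proper_colouring_def by (meson less_le_trans subsetD)

lemma chromatic_number_le: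
  assumes "proper_colouring V E k f"
  shows "chromatic_number V E \<le> k"
  unfolding chromatic_number_def by (rule Least_le) (use assms in blast)

lemma proper_colouring_inj_on_clique:
  assumes "proper_colouring V E k f" and "B \<subseteq> V" and "complete_on B E"
  shows "inj_on f B"
  using assms unfolding proper_colouring_def complete_on_def inj_on_def by blast

lemma inj_on_extends_to_bij_betw:
  assumes "finite X" and "D \<subseteq> X" and "\<sigma> ` D \<subseteq> X" and "inj_on \<sigma> D"
  obtains \<pi> where "bij_betw \<pi> X X" and "\<And>d. d \<in> D \<Longrightarrow> \<pi> d = \<sigma> d"
proof -
  have "card (X - D) = card (X - \<sigma> ` D)"
    using assms by (simp add: card_Diff_subset card_image finite_subset)
  then obtain \<phi> where \<phi>: "bij_betw \<phi> (X - D) (X - \<sigma> ` D)"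
    using finite_same_card_bij assms(1) by blast
  define \<pi> where "\<pi> x = (if x \<in> D then \<sigma> x else \<phi> x)" for x
  have "bij_betw \<pi> D (\<sigma> ` D)"
    using assms(4) by (simp add: bij_betw_cong[of D \<pi> \<sigma>] \<pi>_def inj_on_imp_bij_betw)
  moreover have "bij_betw \<pi> (X - D) (X - \<sigma> ` D)"
    using \<phi> by (subst bij_betw_cong[of "X - D" \<pi> \<phi>]) (simp_all add: \<pi>_def)
  ultimately have "bij_betw \<pi> (D \<union> (X - D)) (\<sigma> ` D \<union> (X - \<sigma> ` D))"
    by (rule bij_betw_combine) blast
  then have "bij_betw \<pi> X X"
    using assms(2,3) by (simp add: Un_absorb1 Un_Diff_cancel)
  then show thesis using that \<pi>_def by simp
qed

lemma proper_colouring_glue: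
  assumes PQ: "P \<union> Q = V" "P \<inter> Q = S"
    and no_edges: "\<And>u v. u \<in> P - S \<Longrightarrow> v \<in> Q - S \<Longrightarrow> \<not> E u v \<and> \<not> E v u"
    and f: "proper_colouring P E m f" and g: "proper_colouring Q E m g"
    and same_classes: "\<And>s t. s \<in> S \<Longrightarrow> t \<in> S \<Longrightarrow> f s = f t \<longleftrightarrow> g s = g t"
  shows "\<exists>h. proper_colouring V E m h"
proof -
  define \<sigma> where "\<sigma> c = f (inv_into S g c)" for c
  have \<sigma>_g: "\<sigma> (g s) = f s" if "s \<in> S" for s
    using same_classes[OF inv_into_into[of "g s" g S] that] f_inv_into_f[of "g s" g S] that
    unfolding \<sigma>_def by simp
  have "inj_on \<sigma> (g ` S)"
    by (rule inj_onI) (auto simp: \<sigma>_g same_classes)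
  moreover have "g ` S \<subseteq> {..<m}" and "\<sigma> ` g ` S \<subseteq> {..<m}"
    using f g PQ(2) \<sigma>_g unfolding proper_colouring_def by auto
  ultimately obtain \<pi> where \<pi>: "bij_betw \<pi> {..<m} {..<m}"
    and \<pi>_\<sigma>: "\<And>c. c \<in> g ` S \<Longrightarrow> \<pi> c = \<sigma> c"
    using inj_on_extends_to_bij_betw[of "{..<m}" "g ` S" \<sigma>] by blast
  have \<pi>_g: "\<pi> (g s) = f s" if "s \<in> S" for s
    using that \<pi>_\<sigma> \<sigma>_g by simp
  define h where "h v = (if v \<in> P then f v else \<pi> (g v))" for v
  have h_P: "h v = f v" if "v \<in> P" for v
    using that h_def by simp
  have h_Q: "h v = \<pi> (g v)" if "v \<in> Q" for v
    using that PQ(2) \<pi>_g h_def by auto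
  have \<pi>_g_less: "\<pi> (g v) < m" if "v \<in> Q" for v
    using g that bij_betw_apply[OF \<pi>] unfolding proper_colouring_def by auto
  have \<pi>_g_edge: "\<pi> (g u) \<noteq> \<pi> (g v)" if "u \<in> Q" "v \<in> Q" "E u v" for u v
  proof -
    have "g u \<noteq> g v" and "g u < m" and "g v < m"
      using g that unfolding proper_colouring_def by auto
    then show ?thesis
      using bij_betw_imp_inj_on[OF \<pi>] unfolding inj_on_def by blast
  qed
  have "proper_colouring V E m h"
    unfolding proper_colouring_def
  proof (intro conjI ballI impI)
    fix v assume "v \<in> V"
    then show "h v < m"
      using f PQ(1) h_P h_Q \<pi>_g_less unfolding proper_colouring_def by (metis Un_iff)
  next
    fix u v assume uv: "u \<in> V" "v \<in> V" "E u v"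
    consider "u \<in> P" "v \<in> P" | "u \<in> Q" "v \<in> Q" | "u \<in> P - S" "v \<in> Q - S" | "u \<in> Q - S" "v \<in> P - S"
      using uv PQ by blast
    then show "h u \<noteq> h v"
    proof cases
      case 1
      then show ?thesis using f uv h_P unfolding proper_colouring_def by simp
    next
      case 2
      then show ?thesis using uv h_Q \<pi>_g_edge by simp
    qed (use no_edges uv in blast)+
  qed
  then show ?thesis by blast
qed

definition separates :: "'a set \<Rightarrow> ('a \<Rightarrow> 'a \<Rightarrow> bool) \<Rightarrow> 'a set \<Rightarrow> 'a set \<Rightarrow> 'a set \<Rightarrow> bool" where
  "separates V E S C D \<longleftrightarrow> C \<union> D = V - S \<and> C \<inter> D = {} \<and> C \<noteq> {} \<and> D \<noteq> {} \<and>
     (\<forall>u\<in>C. \<forall>v\<in>D. \<not> E u v \<and> \<not> E v u)"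

lemma separates_sym: "separates V E S C D \<Longrightarrow> separates V E S D C"
  unfolding separates_def by blast

lemma separating_set_separates:
  assumes "simple_graph V E" and "separating_set V E S"
  obtains C D where "separates V E S C D"
proof -
  obtain x y where xy: "x \<in> V - S" "y \<in> V - S" "\<not> reachable_in (V - S) E x y"
    using assms(2) unfolding separating_set_def disconnected_def by blast
  define C where "C = {v \<in> V - S. reachable_in (V - S) E x v}"
  have C_closed: "v \<in> C" if "u \<in> C" "v \<in> V - S" "E u v \<or> E v u" for u v
  proof -
    have "E u v"
      using that assms(1) unfolding simple_graph_def by blast
    then show ?thesis
      using that unfolding C_def reachable_in_def by (auto intro: rtranclp.rtrancl_into_rtrancl)
  qed
  have "x \<in> C" and "y \<notin> C"
    using xy unfolding C_def reachable_in_def by auto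
  then have "separates V E S C (V - S - C)"
    using xy C_closed unfolding separates_def C_def by blast
  then show thesis ..
qed

lemma minimal_separating_set_neighbour:
  assumes "simple_graph V E" and "minimal_separating_set V E S"
    and "separates V E S C D" and "a \<in> S"
  shows "\<exists>c\<in>C. E a c"
proof -
  define W where "W = V - (S - {a})"
  have "\<not> separating_set V E (S - {a})"
    using assms(2,4) unfolding minimal_separating_set_def by blast
  then have connected: "reachable_in W E u v" if "u \<in> V - S" "v \<in> V - S" for u v
    using assms(2) that unfolding minimal_separating_set_def separating_set_def
      disconnected_def W_def by blast
  obtain c d where "c \<in> C" "d \<in> D"
    using assms(3) unfolding separates_def by blast
  have "w \<in> C \<or> (\<exists>c\<in>C. E c a)" if "reachable_in W E c w" for w
    using that unfolding reachable_in_def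
  proof (induction rule: rtranclp_induct)
    case base
    then show ?case using \<open>c \<in> C\<close> by simp
  next
    case (step y z)
    then show ?case
      using assms(3) unfolding separates_def W_def by blast
  qed
  moreover have "d \<notin> C"
    using \<open>d \<in> D\<close> assms(3) unfolding separates_def by blast
  moreover have "c \<in> V - S" "d \<in> V - S"
    using \<open>c \<in> C\<close> \<open>d \<in> D\<close> assms(3) unfolding separates_def by blast+
  ultimately obtain c' where "c' \<in> C" "E c' a"
    using connected by blast
  then show ?thesis
    using assms(1) unfolding simple_graph_def by blast
qed

lemma vertex_critical_colouring_avoiding:
  assumes "simple_graph V E" and "vertex_critical V E"
    and "y \<in> V" and "P \<subseteq> V - {y}"
  shows "\<exists>f. proper_colouring P E (chromatic_number V E - 1) f"
proof -
  obtain f where "proper_colouring (V - {y}) E (chromatic_number (V - {y}) E) f"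
    using proper_colouring_chromatic_number[of "V - {y}" E] assms(1)
    unfolding simple_graph_def by auto
  moreover have "chromatic_number (V - {y}) E \<le> chromatic_number V E - 1"
    using assms(2,3) unfolding vertex_critical_def by fastforce
  ultimately show ?thesis
    using assms(4) proper_colouring_mono by blast
qed

lemma double_critical_colouring_with_class:
  assumes "simple_graph V E" and "double_critical V E"
    and "E a x" and "a \<in> A" and "A \<subseteq> P" and "P \<subseteq> V - {x}" and "edgeless_on A E"
  shows "\<exists>f. proper_colouring P E (chromatic_number V E - 1) f \<and>
    (\<forall>u\<in>A. \<forall>v\<in>P. f u = f v \<longleftrightarrow> v \<in> A)"
proof -
  let ?k = "chromatic_number V E"
  have "a \<in> V" "x \<in> V"
    using assms(1,3) unfolding simple_graph_def by auto
  then have k: "chromatic_number (V - {a, x}) E + 2 \<le> ?k"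
    using assms(2,3) unfolding double_critical_def by blast
  obtain c where c: "proper_colouring (V - {a, x}) E (chromatic_number (V - {a, x}) E) c"
    using proper_colouring_chromatic_number[of "V - {a, x}" E] assms(1)
    unfolding simple_graph_def by auto
  have c_less: "c v < ?k - 2" if "v \<in> P - A" for v
  proof -
    have "v \<in> V - {a, x}"
      using that assms(4-6) by auto
    then show ?thesis
      using c k unfolding proper_colouring_def by force
  qed
  define f where "f v = (if v \<in> A then ?k - 2 else c v)" for v
  have "proper_colouring P E (?k - 1) f"
    unfolding proper_colouring_def
  proof (intro conjI ballI impI)
    fix v assume "v \<in> P"
    then show "f v < ?k - 1"
      using c_less[of v] k unfolding f_def by (cases "v \<in> A") auto
  next
    fix u v assume uv: "u \<in> P" "v \<in> P" "E u v"
    then have "u \<notin> A \<or> v \<notin> A"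
      using assms(7) unfolding edgeless_on_def by blast
    moreover have "c u \<noteq> c v" if "u \<notin> A" "v \<notin> A"
    proof -
      have "u \<in> V - {a, x}" "v \<in> V - {a, x}"
        using uv that assms(4-6) by auto
      then show ?thesis
        using uv c unfolding proper_colouring_def by blast
    qed
    ultimately show "f u \<noteq> f v"
      using uv c_less[of u] c_less[of v] unfolding f_def by (cases "u \<in> A"; cases "v \<in> A") auto
  qed
  moreover have "\<forall>u\<in>A. \<forall>v\<in>P. f u = f v \<longleftrightarrow> v \<in> A"
    using c_less unfolding f_def by (metis Diff_iff less_irrefl)
  ultimately show ?thesis by blast
qed

lemma colour_classes_on_independent_and_clique:
  assumes "proper_colouring P E m f" and "A \<union> B \<subseteq> P" and "A \<inter> B = {}"
    and "complete_on B E" and "\<forall>u\<in>A. \<forall>v\<in>P. f u = f v \<longleftrightarrow> v \<in> A"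
    and "s \<in> A \<union> B" and "t \<in> A \<union> B"
  shows "f s = f t \<longleftrightarrow> s = t \<or> s \<in> A \<and> t \<in> A"
proof (cases "s \<in> B \<and> t \<in> B")
  case True
  then show ?thesis
    using assms(2,3) proper_colouring_inj_on_clique[OF assms(1) _ assms(4)]
    unfolding inj_on_def by blast
next
  case False
  then consider "s \<in> A" | "t \<in> A"
    using assms(6,7) by blast
  then show ?thesis
  proof cases
    case 1
    then show ?thesis using assms(2,5,7) by auto
  next
    case 2
    moreover have "s \<in> P"
      using assms(2,6) by blast
    ultimately have "f t = f s \<longleftrightarrow> s \<in> A"
      using assms(5) by blast
    then show ?thesis using 2 by metis
  qed
qed

lemma separates_side_colouring:
  assumes "simple_graph V E" and "double_critical V E" and "minimal_separating_set V E S"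
    and "separates V E S C D" and "A \<subseteq> S" and "edgeless_on A E"
  shows "\<exists>f. proper_colouring (C \<union> S) E (chromatic_number V E - 1) f \<and>
    (\<forall>u\<in>A. \<forall>v\<in>C \<union> S. f u = f v \<longleftrightarrow> v \<in> A)"
proof -
  have C_S: "C \<union> S \<subseteq> V - D"
    using assms(3,4) unfolding minimal_separating_set_def separating_set_def separates_def
    by blast
  show ?thesis
  proof (cases "A = {}")
    case True
    obtain y where "y \<in> D"
      using assms(4) unfolding separates_def by blast
    have "\<exists>f. proper_colouring (C \<union> S) E (chromatic_number V E - 1) f"
    proof (rule vertex_critical_colouring_avoiding[OF assms(1)])
      show "vertex_critical V E"
        using assms(2) unfolding double_critical_def by blast
      show "y \<in> V" and "C \<union> S \<subseteq> V - {y}"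
        using \<open>y \<in> D\<close> C_S assms(4) unfolding separates_def by blast+
    qed
    then show ?thesis
      using True by simp
  next
    case False
    then obtain a where "a \<in> A" by blast
    moreover obtain x where "x \<in> D" "E a x"
      using minimal_separating_set_neighbour[OF assms(1,3) separates_sym[OF assms(4)]]
        \<open>a \<in> A\<close> assms(5) by blast
    ultimately show ?thesis
      by (intro double_critical_colouring_with_class[OF assms(1,2)]) (use C_S assms(5,6) in auto)
  qed
qed

theorem proposition20:
  fixes V :: "'a set" and E :: "'a \<Rightarrow> 'a \<Rightarrow> bool" and k :: nat and S :: "'a set"
  assumes "simple_graph V E"
    and "\<not> complete_on V E"
    and "double_critical V E"
    and "chromatic_number V E = k"
    and "k \<ge> 6"
    and "minimal_separating_set V E S"
  shows "\<not> (\<exists>A B. A \<inter> B = {} \<and> A \<union> B = S \<and> edgeless_on A E \<and> complete_on B E)"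
proof
  assume "\<exists>A B. A \<inter> B = {} \<and> A \<union> B = S \<and> edgeless_on A E \<and> complete_on B E"
  then obtain A B where AB: "A \<inter> B = {}" "A \<union> B = S" "edgeless_on A E" "complete_on B E"
    by blast
  have "separating_set V E S"
    using assms(6) unfolding minimal_separating_set_def by blast
  then obtain C D where CD: "separates V E S C D"
    using separating_set_separates[OF assms(1)] by blast
  obtain f where f: "proper_colouring (C \<union> S) E (k - 1) f"
    and f_A: "\<forall>u\<in>A. \<forall>v\<in>C \<union> S. f u = f v \<longleftrightarrow> v \<in> A"
    using separates_side_colouring[OF assms(1,3,6) CD, of A] AB assms(4) by blast
  obtain g where g: "proper_colouring (D \<union> S) E (k - 1) g"
    and g_A: "\<forall>u\<in>A. \<forall>v\<in>D \<union> S. g u = g v \<longleftrightarrow> v \<in> A"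
    using separates_side_colouring[OF assms(1,3,6) separates_sym[OF CD], of A] AB assms(4) by blast
  have "\<exists>h. proper_colouring V E (k - 1) h"
  proof (rule proper_colouring_glue[OF _ _ _ f g])
    show "(C \<union> S) \<union> (D \<union> S) = V" and "(C \<union> S) \<inter> (D \<union> S) = S"
      using CD \<open>separating_set V E S\<close> unfolding separates_def separating_set_def by auto
    show "\<not> E u v \<and> \<not> E v u" if "u \<in> C \<union> S - S" "v \<in> D \<union> S - S" for u v
      using CD that unfolding separates_def by blast
    show "f s = f t \<longleftrightarrow> g s = g t" if "s \<in> S" "t \<in> S" for s t
      using colour_classes_on_independent_and_clique[OF f _ AB(1,4) f_A]
        colour_classes_on_independent_and_clique[OF g _ AB(1,4) g_A] AB(2) that by blast
  qed
  then show False
    using chromatic_number_le assms(4,5) by fastforce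
qed

end
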